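(* Let $p$ be an odd prime, $k\in\{-1,1\}$ and $q$ a positive integer. For every Legendre graph $L_{qp}^k(f,p)$ of order $qp$, the minimum degree is $\delta(L_{qp}^k(f,p))=q\frac{p-1}{2}-1$ and the maximum degree is $\Delta(L_{qp}^k(f,p))=q\frac{p-1}{2}$.
   Context: For an odd prime $p$ and an integer $a$ not divisible by $p$, $(a/p)$ denotes the Legendre symbol: $1$ if $a$ is a quadratic residue mod $p$, $-1$ otherwise. For $k\in\{-1,1\}$, a Legendre graph $L_n^k(f,p)$ of order $n$ is a simple graph on an $n$-element vertex set $V$ together with a bijection $f:V\to\{1,2,\dots,n\}$, whose edges are exactly the pairs $\{a,b\}$ of distinct vertices with $p\nmid f(a)+f(b)$ and $((f(a)+f(b))/p)=k$. *)

theory Defs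
  imports "HOL-Number_Theory.Number_Theory"
begin

definition legendre_adj :: "int \<Rightarrow> nat \<Rightarrow> ('a \<Rightarrow> nat) \<Rightarrow> 'a \<Rightarrow> 'a \<Rightarrow> bool" where
  "legendre_adj k p f a b \<longleftrightarrow>
     a \<noteq> b \<and> \<not> (p dvd (f a + f b)) \<and> Legendre (int (f a + f b)) (int p) = k"

definition legendre_graph :: "nat \<Rightarrow> 'a set \<Rightarrow> ('a \<Rightarrow> nat) \<Rightarrow> bool" where
  "legendre_graph n V f \<longleftrightarrow> finite V \<and> bij_betw f V {1..n}"

definition lg_degree :: "int \<Rightarrow> nat \<Rightarrow> 'a set \<Rightarrow> ('a \<Rightarrow> nat) \<Rightarrow> 'a \<Rightarrow> nat" where
  "lg_degree k p V f v = card {u \<in> V. legendre_adj k p f v u}"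

definition lg_min_degree :: "int \<Rightarrow> nat \<Rightarrow> 'a set \<Rightarrow> ('a \<Rightarrow> nat) \<Rightarrow> nat" where
  "lg_min_degree k p V f = Min (lg_degree k p V f ` V)"

definition lg_max_degree :: "int \<Rightarrow> nat \<Rightarrow> 'a set \<Rightarrow> ('a \<Rightarrow> nat) \<Rightarrow> nat" where
  "lg_max_degree k p V f = Max (lg_degree k p V f ` V)"

end

theory Submission
  imports Defs
begin

text \<open>The degree of a vertex with label \<open>a\<close> counts the labels \<open>b \<noteq> a\<close> in \<open>{1..qp}\<close> with
  \<open>((a + b)/p) = k\<close>. Since the Legendre symbol is \<open>p\<close>-periodic, the \<open>q\<close> blocks of \<open>p\<close>
  consecutive labels each contribute exactly the \<open>(p - 1)/2\<close> residues (or non-residues) mod \<open>p\<close>;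
  these counts follow from Euler's criterion and the bound on roots of \<open>x^((p-1)/2) = \<plusminus>1\<close>.
  Hence every degree is \<open>q(p - 1)/2\<close>, minus one when \<open>(2a/p) = k\<close>. The label \<open>p\<close> attains
  the larger value, and a label \<open>a \<le> p\<close> with \<open>2a \<equiv> r (mod p)\<close> for some \<open>r\<close> with \<open>(r/p) = k\<close>
  attains the smaller one.\<close>

lemma Legendre_mod: "Legendre (a mod p) p = Legendre a p"
  by (simp add: Legendre_def QuadRes_def cong_def)

lemma Legendre_unit_imp_not_dvd:
  assumes "Legendre (int a) (int p) \<in> {-1, 1}"
  shows "\<not> p dvd a"
  using assms by (auto simp: Legendre_def cong_0_iff)

lemma card_Legendre_eq:
  fixes p :: nat and k :: int
  assumes "prime p" "p > 2" "k \<in> {-1, 1}"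
  shows "card {r \<in> {..<p}. Legendre (int r) (int p) = k} = (p - 1) div 2"
proof -
  define h where "h = (p - 1) div 2"
  define A where "A l = {r \<in> {..<p}. Legendre (int r) (int p) = l}" for l
  have "h > 0" using assms(2) by (simp add: h_def)
  have bound: "card (A l) \<le> h" for l
  proof -
    have "A l \<subseteq> {x \<in> {..<p}. [x ^ h = nat (l mod p)] (mod p)}"
    proof
      fix r assume "r \<in> A l"
      then have "[int r ^ h = l] (mod int p)"
        using euler_criterion[OF assms(1,2), of "int r"] by (simp add: A_def h_def cong_sym)
      then have "[int (r ^ h) = int (nat (l mod p))] (mod int p)"
        using assms(2) by (simp add: cong_def)
      then have "[r ^ h = nat (l mod p)] (mod p)"
        by (simp only: cong_int_iff)
      then show "r \<in> {x \<in> {..<p}. [x ^ h = nat (l mod p)] (mod p)}"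
        using \<open>r \<in> A l\<close> by (simp add: A_def)
    qed
    then have "card (A l) \<le> card {x \<in> {..<p}. [x ^ h = nat (l mod p)] (mod p)}"
      by (intro card_mono) auto
    also have "\<dots> \<le> h"
      using roots_mod_prime_bound[OF assms(1) \<open>h > 0\<close>] by simp
    finally show ?thesis .
  qed
  have "A 1 \<union> A (-1) = {1..<p}"
    by (auto simp: A_def Legendre_def cong_0_iff Suc_le_eq intro: gr0I dest: dvd_imp_le)
  moreover have "A 1 \<inter> A (-1) = {}"
    by (auto simp: A_def)
  ultimately have "card (A 1) + card (A (-1)) = p - 1"
    by (metis card_Un_disjoint card_atLeastLessThan finite_Un finite_atLeastLessThan)
  also have "\<dots> = 2 * h"
    using prime_odd_nat[OF assms(1,2)] by (simp add: h_def)
  finally have "card (A 1) + card (A (-1)) = 2 * h" .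
  then show ?thesis
    using bound[of 1] bound[of "-1"] assms(3) by (auto simp: A_def h_def)
qed

lemma sum_periodic_shift:
  fixes g :: "nat \<Rightarrow> 'b::cancel_comm_monoid_add"
  assumes "\<And>b. g (b + n) = g b"
  shows "(\<Sum>i<n. g (m + i)) = (\<Sum>i<n. g i)"
proof (induction m)
  case (Suc m)
  have "(\<Sum>i<n. g (Suc m + i)) + g m = (\<Sum>i<n. g (m + i)) + g (m + n)"
    using sum.lessThan_Suc_shift[of "\<lambda>i. g (m + i)" n] sum.lessThan_Suc[of "\<lambda>i. g (m + i)" n]
    by (simp add: add.commute)
  then show ?case using Suc assms[of m] by (simp add: add.commute)
qed simp

lemma sum_periodic_blocks:
  fixes g :: "nat \<Rightarrow> 'b::comm_semiring_1_cancel"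
  assumes "\<And>b. g (b + n) = g b"
  shows "(\<Sum>i<q * n. g (m + i)) = of_nat q * (\<Sum>i<n. g i)"
proof -
  have "(\<Sum>i<q * n. g (m + i)) = (\<Sum>j<q. \<Sum>i\<in>{j * n..<j * n + n}. g (m + i))"
    by (rule sum.nat_group[symmetric])
  also have "\<dots> = (\<Sum>j<q. \<Sum>i<n. g (m + j * n + i))"
    using sum.atLeastLessThan_shift_bounds[of "\<lambda>i. g (m + i)" 0 "_ * n" n]
    by (simp add: atLeast0LessThan add.commute add.left_commute)
  also have "\<dots> = (\<Sum>j<q. \<Sum>i<n. g i)"
    using sum_periodic_shift[of g n, OF assms] by presburger
  finally show ?thesis by simp
qed

lemma card_Legendre_interval_eq:
  fixes p q a :: nat and k :: int
  assumes "prime p" "p > 2" "k \<in> {-1, 1}"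
  shows "card {b \<in> {1..q * p}. Legendre (int (a + b)) (int p) = k} = q * ((p - 1) div 2)"
proof -
  define g :: "nat \<Rightarrow> nat" where "g i = of_bool (Legendre (int i) (int p) = k)" for i
  have periodic: "g (i + p) = g i" for i
    using Legendre_mod[of "int (i + p)" "int p"] Legendre_mod[of "int i" "int p"]
    by (simp add: g_def)
  have "card {b \<in> {1..q * p}. Legendre (int (a + b)) (int p) = k} = (\<Sum>b\<in>{1..q * p}. g (a + b))"
    by (simp add: g_def sum_of_bool_eq Int_def)
  also have "\<dots> = (\<Sum>i<q * p. g (Suc a + i))"
    using sum.atLeast1_atMost_eq[of "\<lambda>b. g (a + b)"] by simp
  also have "\<dots> = q * (\<Sum>i<p. g i)"
    using sum_periodic_blocks[of g p, where m = "Suc a" and q = q, OF periodic] by simp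
  also have "(\<Sum>i<p. g i) = (p - 1) div 2"
    using card_Legendre_eq[OF assms] by (simp add: g_def sum_of_bool_eq Int_def)
  finally show ?thesis .
qed

lemma exists_double_Legendre_eq:
  fixes p :: nat and k :: int
  assumes "prime p" "p > 2" "k \<in> {-1, 1}"
  obtains a where "a \<in> {1..<p}" "Legendre (int (2 * a)) (int p) = k"
proof -
  have "card {r \<in> {..<p}. Legendre (int r) (int p) = k} \<noteq> 0"
    using card_Legendre_eq[OF assms] assms(2) by simp
  then obtain r where r: "r < p" "Legendre (int r) (int p) = k"
    by (metis (mono_tags, lifting) Collect_empty_eq card.empty lessThan_iff)
  then have "r \<noteq> 0"
    using assms(3) by (cases "r = 0") (auto simp: Legendre_def)
  have "odd p"
    using prime_odd_nat[OF assms(1,2)] .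
  define a where "a = (if even r then r else r + p) div 2"
  have "2 * a = (if even r then r else r + p)"
    using \<open>odd p\<close> by (simp add: a_def)
  then have "a \<in> {1..<p}" and "int (2 * a) mod int p = int r mod int p"
    using r(1) \<open>r \<noteq> 0\<close> \<open>odd p\<close> by (auto split: if_splits elim!: oddE)
  then show ?thesis
    using that r(2) Legendre_mod[of "int (2 * a)" "int p"] Legendre_mod[of "int r" "int p"] by metis
qed

lemma lg_degree_eq_card:
  assumes "bij_betw f V {1..n}" "v \<in> V"
  shows "lg_degree k p V f v =
    card ({b \<in> {1..n}. \<not> p dvd (f v + b) \<and> Legendre (int (f v + b)) (int p) = k} - {f v})"
    (is "_ = card ?B")
proof -
  have "legendre_adj k p f v u \<longleftrightarrow> f u \<in> ?B" if "u \<in> V" for u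
    using assms that bij_betw_apply[OF assms(1) that] unfolding legendre_adj_def bij_betw_def inj_on_def
    by blast
  then have N: "{u \<in> V. legendre_adj k p f v u} = V \<inter> f -` ?B"
    by blast
  have "?B \<subseteq> f ` V"
    using assms(1) by (auto simp: bij_betw_def)
  then have "f ` (V \<inter> f -` ?B) = ?B"
    by (auto intro: rev_image_eqI)
  then have "bij_betw f (V \<inter> f -` ?B) ?B"
    by (rule bij_betw_subset[OF assms(1) Int_lower1])
  then show ?thesis
    unfolding lg_degree_def N by (rule bij_betw_same_card)
qed

lemma lg_degree_legendre_graph:
  fixes p q :: nat and k :: int
  assumes "prime p" "p > 2" "k \<in> {-1, 1}" "legendre_graph (q * p) V f" "v \<in> V"
  shows "lg_degree k p V f v =
    q * ((p - 1) div 2) - of_bool (Legendre (int (2 * f v)) (int p) = k)"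
proof -
  let ?S = "{b \<in> {1..q * p}. Legendre (int (f v + b)) (int p) = k}"
  have bij: "bij_betw f V {1..q * p}"
    using assms(4) by (simp add: legendre_graph_def)
  have "\<not> p dvd (f v + b)" if "Legendre (int (f v + b)) (int p) = k" for b
    using Legendre_unit_imp_not_dvd[of "f v + b" p] that assms(3) by simp
  then have "{b \<in> {1..q * p}. \<not> p dvd (f v + b) \<and> Legendre (int (f v + b)) (int p) = k} = ?S"
    by blast
  then have "lg_degree k p V f v = card (?S - {f v})"
    using lg_degree_eq_card[OF bij assms(5)] by simp
  also have "\<dots> = card ?S - of_bool (f v \<in> ?S)"
    by (simp add: card_Diff_singleton_if)
  also have "f v \<in> ?S \<longleftrightarrow> Legendre (int (2 * f v)) (int p) = k"
    using bij_betw_apply[OF bij assms(5)] by (simp only: mem_Collect_eq mult_2 simp_thms)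
  finally show ?thesis
    using card_Legendre_interval_eq[OF assms(1-3)] by simp
qed

lemma lg_degree_image_legendre_graph:
  fixes p q :: nat and k :: int
  assumes "prime p" "p > 2" "k \<in> {-1, 1}" "q > 0" "legendre_graph (q * p) V f"
  defines "c \<equiv> q * ((p - 1) div 2)"
  shows "lg_degree k p V f ` V = {c - 1, c}"
proof -
  have deg: "lg_degree k p V f v = c - of_bool (Legendre (int (2 * f v)) (int p) = k)"
    if "v \<in> V" for v
    using lg_degree_legendre_graph[OF assms(1-3,5) that] by (simp add: c_def)
  obtain a where a: "a \<in> {1..<p}" "Legendre (int (2 * a)) (int p) = k"
    using exists_double_Legendre_eq[OF assms(1-3)] .
  have "p \<le> q * p"
    using assms(4) by simp
  then have "a \<le> q * p"
    using a(1) by (meson atLeastLessThan_iff le_trans less_imp_le)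
  then have "{a, p} \<subseteq> {1..q * p}"
    using a(1) \<open>p \<le> q * p\<close> assms(2) by simp
  then have "{a, p} \<subseteq> f ` V"
    using assms(5) by (simp add: legendre_graph_def bij_betw_def)
  then obtain v1 v2 where v1: "v1 \<in> V" "f v1 = a" and v2: "v2 \<in> V" "f v2 = p"
    by blast
  have "Legendre (int (2 * p)) (int p) = 0"
    by (simp add: Legendre_def cong_0_iff)
  then have "lg_degree k p V f v1 = c - 1" "lg_degree k p V f v2 = c"
    using deg[OF v1(1)] deg[OF v2(1)] v1(2) v2(2) a(2) assms(3) by auto
  moreover have "lg_degree k p V f ` V \<subseteq> {c - 1, c}"
    using deg by auto
  ultimately show ?thesis
    using v1(1) v2(1) by (auto intro: rev_image_eqI)
qed

theorem mainTheorem4: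
  fixes p q :: nat and k :: int and V :: "'a set" and f :: "'a \<Rightarrow> nat"
  assumes "prime p" and "odd p" and "k \<in> {-1, 1}" and "q > 0"
    and "legendre_graph (q * p) V f"
  shows "int (lg_min_degree k p V f) = int q * ((int p - 1) div 2) - 1 \<and>
         int (lg_max_degree k p V f) = int q * ((int p - 1) div 2)"
proof -
  define c where "c = q * ((p - 1) div 2)"
  have "p > 2"
    using assms(1,2) prime_ge_2_nat[OF assms(1)] by (cases "p = 2") auto
  then have "lg_degree k p V f ` V = {c - 1, c}"
    using lg_degree_image_legendre_graph[OF assms(1) _ assms(3-5)] by (simp add: c_def)
  then have "lg_min_degree k p V f = c - 1" "lg_max_degree k p V f = c"
    by (simp_all add: lg_min_degree_def lg_max_degree_def)
  moreover have "c \<ge> 1"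
    using \<open>p > 2\<close> assms(4) by (simp add: c_def)
  moreover have "(int p - 1) div 2 = int ((p - 1) div 2)"
    using \<open>p > 2\<close> by (simp add: zdiv_int of_nat_diff)
  ultimately show ?thesis
    by (simp add: c_def of_nat_diff)
qed

end
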